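(* Let $X$ be a shift space. For every $n\ge1$ and $m\ge0$, the graph $\mathcal E_n(w)$ is a tree for all $w\in\mathcal L_{\ge m}(X)$ if and only if the graph $\mathcal E_{n+1}(w)$ is a tree for all $w\in\mathcal L_{\ge m}(X)$.
   Context: $A$ is a finite alphabet; a shift space is a closed shift-invariant subset $X\subseteq A^{\mathbb Z}$; $\mathcal L(X)$ is its set of finite factors, $\mathcal L_n(X)=\mathcal L(X)\cap A^n$, $\mathcal L_{\ge n}(X)=\bigcup_{k\ge n}\mathcal L_k(X)$. For $w\in\mathcal L(X)$ and $n\ge1$: $L_n(w)=\{u\in\mathcal L_n(X):uw\in\mathcal L(X)\}$, $R_n(w)=\{v\in\mathcal L_n(X):wv\in\mathcal L(X)\}$, and the extension graph $\mathcal E_n(w)$ is the undirected bipartite graph with vertex set the disjoint union of $L_n(w)$ and $R_n(w)$ and an edge $(u,v)$ iff $uwv\in\mathcal L(X)$. *)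

theory Defs
  imports Main
begin

definition shift :: "(int \<Rightarrow> 'a) \<Rightarrow> (int \<Rightarrow> 'a)" where
  "shift x = (\<lambda>i. x (i + 1))"

text \<open>Closedness in the product topology of discrete A (the cylinder-set neighbourhoods
  {y. y agrees with x on [-N,N]} form a neighbourhood base at x).\<close>

definition closed_shift :: "(int \<Rightarrow> 'a) set \<Rightarrow> bool" where
  "closed_shift X \<longleftrightarrow>
     (\<forall>x. (\<forall>N::nat. \<exists>y\<in>X. \<forall>i. \<bar>i\<bar> \<le> int N \<longrightarrow> y i = x i) \<longrightarrow> x \<in> X)"

definition shift_space :: "(int \<Rightarrow> 'a::finite) set \<Rightarrow> bool" where
  "shift_space X \<longleftrightarrow> closed_shift X \<and> shift ` X = X"

definition factor :: "(int \<Rightarrow> 'a) \<Rightarrow> int \<Rightarrow> nat \<Rightarrow> 'a list" where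
  "factor x i n = map (\<lambda>k. x (i + int k)) [0..<n]"

definition lang :: "(int \<Rightarrow> 'a) set \<Rightarrow> 'a list set" where
  "lang X = {w. \<exists>x\<in>X. \<exists>i. w = factor x i (length w)}"

definition lang_n :: "(int \<Rightarrow> 'a) set \<Rightarrow> nat \<Rightarrow> 'a list set" where
  "lang_n X n = {w \<in> lang X. length w = n}"

definition lang_ge :: "(int \<Rightarrow> 'a) set \<Rightarrow> nat \<Rightarrow> 'a list set" where
  "lang_ge X n = {w \<in> lang X. n \<le> length w}"

definition left_ext :: "(int \<Rightarrow> 'a) set \<Rightarrow> nat \<Rightarrow> 'a list \<Rightarrow> 'a list set" where
  "left_ext X n w = {u \<in> lang_n X n. u @ w \<in> lang X}"

definition right_ext :: "(int \<Rightarrow> 'a) set \<Rightarrow> nat \<Rightarrow> 'a list \<Rightarrow> 'a list set" where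
  "right_ext X n w = {v \<in> lang_n X n. w @ v \<in> lang X}"

definition ext_vertices :: "(int \<Rightarrow> 'a) set \<Rightarrow> nat \<Rightarrow> 'a list \<Rightarrow> ('a list + 'a list) set" where
  "ext_vertices X n w = Inl ` left_ext X n w \<union> Inr ` right_ext X n w"

definition ext_adj :: "(int \<Rightarrow> 'a) set \<Rightarrow> nat \<Rightarrow> 'a list \<Rightarrow> ('a list + 'a list) \<Rightarrow> ('a list + 'a list) \<Rightarrow> bool" where
  "ext_adj X n w p q \<longleftrightarrow> p \<in> ext_vertices X n w \<and> q \<in> ext_vertices X n w \<and>
     ((\<exists>u v. p = Inl u \<and> q = Inr v \<and> u @ w @ v \<in> lang X) \<or>
      (\<exists>u v. p = Inr v \<and> q = Inl u \<and> u @ w @ v \<in> lang X))"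

definition graph_connected :: "'v set \<Rightarrow> ('v \<Rightarrow> 'v \<Rightarrow> bool) \<Rightarrow> bool" where
  "graph_connected V E \<longleftrightarrow>
     (\<forall>p\<in>V. \<forall>q\<in>V. (p, q) \<in> {(a, b). a \<in> V \<and> b \<in> V \<and> E a b}\<^sup>*)"

definition is_cycle :: "'v set \<Rightarrow> ('v \<Rightarrow> 'v \<Rightarrow> bool) \<Rightarrow> 'v list \<Rightarrow> bool" where
  "is_cycle V E cs \<longleftrightarrow> 3 \<le> length cs \<and> distinct cs \<and> set cs \<subseteq> V \<and>
     (\<forall>i. Suc i < length cs \<longrightarrow> E (cs ! i) (cs ! Suc i)) \<and> E (last cs) (hd cs)"

definition graph_acyclic :: "'v set \<Rightarrow> ('v \<Rightarrow> 'v \<Rightarrow> bool) \<Rightarrow> bool" where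
  "graph_acyclic V E \<longleftrightarrow> (\<nexists>cs. is_cycle V E cs)"

definition is_tree :: "'v set \<Rightarrow> ('v \<Rightarrow> 'v \<Rightarrow> bool) \<Rightarrow> bool" where
  "is_tree V E \<longleftrightarrow> V \<noteq> {} \<and> graph_connected V E \<and> graph_acyclic V E"

definition ext_graph_is_tree :: "(int \<Rightarrow> 'a) set \<Rightarrow> nat \<Rightarrow> 'a list \<Rightarrow> bool" where
  "ext_graph_is_tree X n w = is_tree (ext_vertices X n w) (ext_adj X n w)"

end

theory Submission
  imports Defs
begin

text \<open>
  Let E_{p,q}(w) be the extension graph with left extensions of length p and right extensions
  of length q, and let b_{p,q}(w) be its number of edges minus its number of vertices plus one.
  A finite graph is a tree iff it is nonempty, connected and has one edge fewer than vertices,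
  so a connected E_{p,q}(w) has b_{p,q}(w) \<ge> 0, with equality iff it is a tree.
  Splitting a right extension of length q + q' as t s gives
  b_{p,q+q'}(w) = b_{p,q}(w) + (sum over t of b_{p,q'}(w t)),
  and connectedness both descends to shorter right extensions and glues along the words t.
  Hence, over all words of length at least m, every E_{p,q} (q \<ge> 1) is a tree iff every
  E_{p,1} is. Reversing all words exchanges left and right, so for p, q \<ge> 1 this is equivalent
  to every E_{1,1} being a tree, independently of p and q.
\<close>

section \<open>Trees by counting edges\<close>

text \<open>Each undirected edge occurs in both orientations, so a tree has 2 |V| - 2 of these pairs.\<close>

definition graph_edges :: "'v set \<Rightarrow> ('v \<Rightarrow> 'v \<Rightarrow> bool) \<Rightarrow> ('v \<times> 'v) set" where
  "graph_edges V E = {(a, b). a \<in> V \<and> b \<in> V \<and> E a b}"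

definition is_path :: "'v set \<Rightarrow> ('v \<Rightarrow> 'v \<Rightarrow> bool) \<Rightarrow> 'v list \<Rightarrow> bool" where
  "is_path V E ps \<longleftrightarrow> distinct ps \<and> set ps \<subseteq> V \<and> (\<forall>i. Suc i < length ps \<longrightarrow> E (ps ! i) (ps ! Suc i))"

lemma card_Diff_pair: "finite A \<Longrightarrow> a \<in> A \<Longrightarrow> b \<in> A \<Longrightarrow> a \<noteq> b \<Longrightarrow> card (A - {a, b}) + 2 = card A"
  using card_mono[of A "{a, b}"] by (simp add: card_Diff_subset)

lemma graph_connected_iff_rtrancl:
  "graph_connected V E \<longleftrightarrow> (\<forall>p\<in>V. \<forall>q\<in>V. (p, q) \<in> (graph_edges V E)\<^sup>*)"
  by (simp add: graph_connected_def graph_edges_def)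

lemma finite_graph_edges: "finite V \<Longrightarrow> finite (graph_edges V E)"
  by (rule finite_subset[of _ "V \<times> V"]) (auto simp: graph_edges_def)

lemma sym_graph_edges: "(\<And>x y. E x y \<Longrightarrow> E y x) \<Longrightarrow> sym (graph_edges V E)"
  by (auto simp: graph_edges_def intro: symI)

lemma is_cycle_iff_path:
  "is_cycle V E cs \<longleftrightarrow> 3 \<le> length cs \<and> is_path V E cs \<and> E (last cs) (hd cs)"
  by (auto simp: is_cycle_def is_path_def)

lemma rtrancl_map_rtrancl:
  assumes "(a, b) \<in> R\<^sup>*" and "\<And>x y. (x, y) \<in> R \<Longrightarrow> (f x, f y) \<in> S\<^sup>*"
  shows "(f a, f b) \<in> S\<^sup>*"
  using assms(1)
proof (induction rule: rtrancl_induct)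
  case (step y z)
  then show ?case using assms(2) by (meson rtrancl_trans)
qed simp

lemma is_path_snoc:
  assumes "is_path V E ps" "ps \<noteq> []" "z \<notin> set ps" "z \<in> V" "E (last ps) z"
  shows "is_path V E (ps @ [z])"
  unfolding is_path_def
proof (intro conjI allI impI)
  fix i assume i: "Suc i < length (ps @ [z])"
  show "E ((ps @ [z]) ! i) ((ps @ [z]) ! Suc i)"
  proof (cases "Suc i < length ps")
    case True
    then show ?thesis using assms(1) by (simp add: is_path_def nth_append)
  next
    case False
    then have "i = length ps - 1" "Suc i = length ps" using i by auto
    then show ?thesis using assms(2,5) by (simp add: nth_append last_conv_nth)
  qed
qed (use assms in \<open>auto simp: is_path_def\<close>)

lemma is_path_drop: "is_path V E ps \<Longrightarrow> is_path V E (drop j ps)"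
  unfolding is_path_def by (auto dest: in_set_dropD)

lemma is_path_take: "is_path V E ps \<Longrightarrow> is_path V E (take k ps)"
  unfolding is_path_def by (auto dest: in_set_takeD)

lemma is_path_mono:
  assumes "is_path V E ps" and "\<And>x y. x \<in> set ps \<Longrightarrow> y \<in> set ps \<Longrightarrow> E x y \<Longrightarrow> E' x y"
  shows "is_path V E' ps"
  using assms unfolding is_path_def by (metis Suc_lessD nth_mem)

lemma is_path_rtrancl:
  "is_path V E ps \<Longrightarrow> ps \<noteq> [] \<Longrightarrow> (hd ps, last ps) \<in> (graph_edges V E)\<^sup>*"
proof (induction ps rule: rev_induct)
  case (snoc z ps)
  show ?case
  proof (cases "ps = []")
    case False
    have "is_path V E ps"
      using is_path_take[OF snoc.prems(1), of "length ps"] by simp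
    moreover have "E (last ps) z"
      using snoc.prems(1) False unfolding is_path_def
      by (auto simp: last_conv_nth nth_append dest: spec[of _ "length ps - 1"])
    moreover have "last ps \<in> V" "z \<in> V"
      using snoc.prems(1) False by (auto simp: is_path_def)
    ultimately show ?thesis
      using snoc.IH False by (auto simp: graph_edges_def intro: rtrancl_into_rtrancl)
  qed simp
qed simp

lemma length_path_le_card: "is_path V E ps \<Longrightarrow> finite V \<Longrightarrow> length ps \<le> card V"
  unfolding is_path_def by (metis card_mono distinct_card)

lemma acyclic_has_leaf:
  assumes fin: "finite V" and wf: "\<And>x y. E x y \<Longrightarrow> x \<in> V \<and> y \<in> V"
    and sym: "\<And>x y. E x y \<Longrightarrow> E y x" and irr: "\<And>x. \<not> E x x"
    and ac: "graph_acyclic V E" and "E a b"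
  shows "\<exists>x y. E x y \<and> (\<forall>z. E x z \<longrightarrow> z = y)"
proof -
  \<comment> \<open>the end of a longest path is a leaf: another neighbour would extend the path or close a cycle\<close>
  let ?P = "\<lambda>ps. is_path V E ps \<and> 2 \<le> length ps"
  have "?P [a, b]"
    using \<open>E a b\<close> wf irr by (auto simp: is_path_def less_Suc_eq nth_Cons split: nat.splits)
  then obtain ps where ps: "?P ps" and longest: "\<And>qs. ?P qs \<Longrightarrow> length qs \<le> length ps"
    using ex_has_greatest_nat[of ?P "[a, b]" length "Suc (card V)"] length_path_le_card fin
    by (metis le_imp_less_Suc)
  define n where "n = length ps"
  define x where "x = last ps"
  define y where "y = ps ! (n - 2)"
  have ps_ne: "ps \<noteq> []" and n2: "2 \<le> n" using ps by (auto simp: n_def)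
  have x_nth: "x = ps ! (n - 1)" using ps_ne by (simp add: x_def n_def last_conv_nth)
  have "Suc (n - 2) = n - 1" "Suc (n - 2) < n" using n2 by arith+
  then have "E y x" using ps unfolding is_path_def x_nth y_def n_def by metis
  have "z = y" if "E x z" for z
  proof (rule ccontr)
    assume "z \<noteq> y"
    show False
    proof (cases "z \<in> set ps")
      case False
      then have "?P (ps @ [z])"
        using ps ps_ne wf[OF \<open>E x z\<close>] \<open>E x z\<close> by (auto simp: x_def intro: is_path_snoc)
      then show False using longest by fastforce
    next
      case True
      then obtain j where j: "j < n" "ps ! j = z" by (metis in_set_conv_nth n_def)
      have "j \<noteq> n - 1" using irr \<open>E x z\<close> j x_nth by auto
      moreover have "j \<noteq> n - 2" using \<open>z \<noteq> y\<close> j y_def by auto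
      ultimately have "is_cycle V E (drop j ps)"
        using j n2 ps \<open>E x z\<close> unfolding is_cycle_iff_path
        by (auto simp: is_path_drop hd_drop_conv_nth x_def n_def)
      then show False using ac by (auto simp: graph_acyclic_def)
    qed
  qed
  then show ?thesis using sym[OF \<open>E y x\<close>] by blast
qed

lemma card_graph_edges_ge:
  assumes con: "graph_connected V E" and sym: "\<And>x y. E x y \<Longrightarrow> E y x"
  shows "2 * card V \<le> card (graph_edges V E) + 2"
proof (cases "finite V \<and> V \<noteq> {}")
  case True
  then have fin: "finite V" and "V \<noteq> {}" by auto
  let ?R = "graph_edges V E"
  obtain r where r: "r \<in> V" using \<open>V \<noteq> {}\<close> by auto
  have reach: "\<exists>k. (r, v) \<in> ?R ^^ k" if "v \<in> V" for v
    using con r that unfolding graph_connected_iff_rtrancl by (simp add: rtrancl_power)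
  define d where "d v = (LEAST k. (r, v) \<in> ?R ^^ k)" for v
  have dI: "(r, v) \<in> ?R ^^ d v" if "v \<in> V" for v
    using reach[OF that] unfolding d_def by (meson LeastI_ex)
  have dL: "d v \<le> k" if "(r, v) \<in> ?R ^^ k" for v k
    using that unfolding d_def by (simp add: Least_le)
  have "\<forall>v \<in> V - {r}. \<exists>u. (u, v) \<in> ?R \<and> d u < d v"
  proof
    fix v assume "v \<in> V - {r}"
    then have that: "v \<in> V" "v \<noteq> r" by auto
    have "d v \<noteq> 0" using dI[OF that(1)] that(2) by (metis relpow_0_E)
    then obtain k where k: "d v = Suc k" by (cases "d v") auto
    then have "(r, v) \<in> ?R ^^ k O ?R" using dI[OF that(1)] by simp
    then obtain u where "(r, u) \<in> ?R ^^ k" "(u, v) \<in> ?R" by blast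
    then show "\<exists>u. (u, v) \<in> ?R \<and> d u < d v" using dL k by fastforce
  qed
  \<comment> \<open>a breadth-first spanning tree: every vertex but the root has a parent closer to the root\<close>
  then obtain p where p: "\<forall>v \<in> V - {r}. (p v, v) \<in> ?R \<and> d (p v) < d v"
    by (rule bchoice[elim_format]) blast
  let ?A = "V - {r}"
  let ?up = "(\<lambda>v. (v, p v)) ` ?A" and ?down = "(\<lambda>v. (p v, v)) ` ?A"
  have "?up \<union> ?down \<subseteq> ?R"
    using p sym by (auto simp: graph_edges_def)
  moreover have "?up \<inter> ?down = {}"
  proof (rule ccontr)
    assume "?up \<inter> ?down \<noteq> {}"
    then obtain v v' where "v \<in> ?A" "v' \<in> ?A" "v = p v'" "p v = v'" by blast
    moreover have "d (p v) < d v" "d (p v') < d v'" using p calculation(1,2) by auto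
    ultimately show False by simp
  qed
  moreover have "card ?up = card ?A" "card ?down = card ?A"
    by (auto intro!: card_image inj_onI)
  ultimately have "2 * card ?A \<le> card ?R"
    using fin finite_graph_edges[OF fin] card_mono[of ?R "?up \<union> ?down"]
    by (simp add: card_Un_disjoint)
  then show ?thesis using r fin by simp
qed auto

lemma is_cycle_mono:
  assumes "is_cycle V' E' cs" and "\<And>x y. E' x y \<Longrightarrow> E x y" and "V' \<subseteq> V"
  shows "is_cycle V E cs"
  using assms unfolding is_cycle_def by (meson subset_trans)

lemma card_graph_edges_le:
  assumes "finite V" and "V \<noteq> {}" and "\<And>x y. E x y \<Longrightarrow> x \<in> V \<and> y \<in> V"
    and "\<And>x y. E x y \<Longrightarrow> E y x" and "\<And>x. \<not> E x x" and "graph_acyclic V E"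
  shows "card (graph_edges V E) + 2 \<le> 2 * card V"
  using assms
proof (induction "card V" arbitrary: V E rule: less_induct)
  case less
  show ?case
  proof (cases "\<exists>a b. E a b")
    case False
    then have "graph_edges V E = {}" by (auto simp: graph_edges_def)
    moreover have "card V > 0" using less.prems(1,2) by (auto simp: card_gt_0_iff)
    ultimately show ?thesis by simp
  next
    case True
    then obtain x y where xy: "E x y" "\<And>z. E x z \<Longrightarrow> z = y"
      using acyclic_has_leaf[OF less.prems(1,3-6)] by blast
    define V' where "V' = V - {x}"
    define E' where "E' = (\<lambda>p q. E p q \<and> p \<noteq> x \<and> q \<noteq> x)"
    have "x \<in> V" "y \<in> V" "x \<noteq> y" using less.prems(3,5) xy(1) by auto
    have "card V' < card V" unfolding V'_def by (rule card_Diff1_less[OF less.prems(1) \<open>x \<in> V\<close>])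
    have IH: "card (graph_edges V' E') + 2 \<le> 2 * card V'"
    proof (rule less.hyps[OF \<open>card V' < card V\<close>])
      show "finite V'" "V' \<noteq> {}" using less.prems(1) \<open>y \<in> V\<close> \<open>x \<noteq> y\<close> by (auto simp: V'_def)
      show "\<And>p q. E' p q \<Longrightarrow> p \<in> V' \<and> q \<in> V'" using less.prems(3) by (auto simp: E'_def V'_def)
      show "\<And>p q. E' p q \<Longrightarrow> E' q p" "\<And>p. \<not> E' p p" using less.prems(4,5) unfolding E'_def by blast+
      show "graph_acyclic V' E'"
        unfolding graph_acyclic_def
      proof
        assume "\<exists>cs. is_cycle V' E' cs"
        then obtain cs where "is_cycle V' E' cs" ..
        then have "is_cycle V E cs" by (rule is_cycle_mono) (auto simp: E'_def V'_def)
        then show False using less.prems(6) by (simp add: graph_acyclic_def)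
      qed
    qed
    have "\<forall>z. E x z \<or> E z x \<longrightarrow> z = y" using xy less.prems(4) by blast
    then have "graph_edges V' E' = graph_edges V E - {(x, y), (y, x)}"
      by (auto simp: graph_edges_def V'_def E'_def)
    moreover have "(x, y) \<in> graph_edges V E" "(y, x) \<in> graph_edges V E"
      using xy(1) less.prems(4)[OF xy(1)] \<open>x \<in> V\<close> \<open>y \<in> V\<close> by (auto simp: graph_edges_def)
    ultimately have "card (graph_edges V' E') + 2 = card (graph_edges V E)"
      using card_Diff_pair[OF finite_graph_edges[OF less.prems(1)]] \<open>x \<noteq> y\<close> by simp
    moreover have "card V' + 1 = card V"
      using card_Suc_Diff1[OF less.prems(1) \<open>x \<in> V\<close>] by (simp add: V'_def)
    ultimately show ?thesis using IH by simp
  qed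
qed

lemma graph_connected_delete_cycle_edge:
  assumes con: "graph_connected V E" and sym: "\<And>x y. E x y \<Longrightarrow> E y x"
    and cyc: "is_cycle V E cs"
  shows "graph_connected V (\<lambda>x y. E x y \<and> {x, y} \<noteq> {hd cs, cs ! 1})"
    (is "graph_connected V ?E'")
proof -
  let ?a = "hd cs" and ?b = "cs ! 1"
  let ?R = "graph_edges V E" and ?R' = "graph_edges V ?E'"
  have len: "3 \<le> length cs" and path: "is_path V E cs" and closing: "E (last cs) ?a"
    using cyc by (auto simp: is_cycle_iff_path)
  have dist: "distinct cs" and "set cs \<subseteq> V" using path by (auto simp: is_path_def)
  have cs: "cs = ?a # tl cs" "tl cs \<noteq> []" using len by (cases cs; auto)+
  have a_notin: "?a \<notin> set (tl cs)" using dist cs(1) by (metis distinct.simps(2))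
  \<comment> \<open>the rest of the cycle avoids its first vertex, hence the deleted edge\<close>
  have "is_path V ?E' (tl cs)"
  proof (rule is_path_mono)
    show "is_path V E (tl cs)" using is_path_drop[OF path, of 1] by (simp add: drop_Suc)
  qed (use a_notin in \<open>auto simp: doubleton_eq_iff\<close>)
  then have "(hd (tl cs), last (tl cs)) \<in> ?R'\<^sup>*" using cs(2) by (rule is_path_rtrancl)
  moreover have "hd (tl cs) = ?b" using cs by (metis hd_conv_nth nth_Cons_Suc One_nat_def)
  moreover have "last (tl cs) = last cs" using cs by (metis last_ConsR)
  ultimately have "(?b, last cs) \<in> ?R'\<^sup>*" by simp
  moreover have "(last cs, ?a) \<in> ?R'"
  proof -
    let ?k = "length cs - 1"
    have k: "?k < length cs" "?k \<noteq> 0" "?k \<noteq> 1" "1 < length cs" "0 < length cs" using len by auto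
    have "cs \<noteq> []" using len by auto
    then have "last cs = cs ! ?k" "?a = cs ! 0" by (simp_all add: last_conv_nth hd_conv_nth)
    moreover have "cs ! ?k \<noteq> cs ! 1" by (metis dist k(1,3,4) nth_eq_iff_index_eq)
    moreover have "cs ! ?k \<noteq> cs ! 0" by (metis dist k(1,2,5) nth_eq_iff_index_eq)
    ultimately have "last cs \<noteq> ?b" "last cs \<noteq> ?a" by auto
    then show ?thesis
      using closing \<open>set cs \<subseteq> V\<close> \<open>cs \<noteq> []\<close> by (auto simp: graph_edges_def doubleton_eq_iff)
  qed
  ultimately have "(?b, ?a) \<in> ?R'\<^sup>*" by (rule rtrancl_into_rtrancl)
  moreover have "sym ?R'" by (rule sym_graph_edges) (metis sym insert_commute)
  ultimately have deleted: "(?a, ?b) \<in> ?R'\<^sup>*" "(?b, ?a) \<in> ?R'\<^sup>*"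
    by (auto intro: symD[OF sym_rtrancl])
  have "?R \<subseteq> ?R'\<^sup>*"
  proof
    fix e assume "e \<in> ?R"
    show "e \<in> ?R'\<^sup>*"
    proof (cases "e \<in> {(?a, ?b), (?b, ?a)}")
      case True
      then show ?thesis using deleted by blast
    next
      case False
      then have "e \<in> ?R'" using \<open>e \<in> ?R\<close> by (auto simp: graph_edges_def doubleton_eq_iff)
      then show ?thesis by blast
    qed
  qed
  then have "?R\<^sup>* \<subseteq> ?R'\<^sup>*" by (rule rtrancl_subset_rtrancl)
  then show ?thesis using con unfolding graph_connected_iff_rtrancl by blast
qed

lemma is_cycle_first_edge:
  assumes "is_cycle V E cs"
  shows "E (hd cs) (cs ! 1)" "hd cs \<noteq> cs ! 1" "hd cs \<in> V" "cs ! 1 \<in> V"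
proof -
  have len: "3 \<le> length cs" and "distinct cs" "set cs \<subseteq> V"
    using assms by (auto simp: is_cycle_def)
  have hd: "hd cs = cs ! 0" using len by (cases cs) auto
  show "E (hd cs) (cs ! 1)" using assms len hd by (simp add: is_cycle_def)
  show "hd cs \<noteq> cs ! 1" using nth_eq_iff_index_eq[OF \<open>distinct cs\<close>, of 0 1] len hd by force
  have "0 < length cs" "1 < length cs" using len by linarith+
  then have "cs ! 0 \<in> set cs" "cs ! 1 \<in> set cs" by simp_all
  then show "hd cs \<in> V" "cs ! 1 \<in> V" using \<open>set cs \<subseteq> V\<close> hd by auto
qed

lemma card_graph_edges_delete_cycle_edge:
  assumes fin: "finite V" and sym: "\<And>x y. E x y \<Longrightarrow> E y x" and cyc: "is_cycle V E cs"
  shows "card (graph_edges V (\<lambda>x y. E x y \<and> {x, y} \<noteq> {hd cs, cs ! 1})) + 2 = card (graph_edges V E)"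
proof -
  note edge = is_cycle_first_edge[OF cyc]
  have "graph_edges V (\<lambda>x y. E x y \<and> {x, y} \<noteq> {hd cs, cs ! 1})
      = graph_edges V E - {(hd cs, cs ! 1), (cs ! 1, hd cs)}"
    by (auto simp: graph_edges_def doubleton_eq_iff)
  moreover have "(hd cs, cs ! 1) \<in> graph_edges V E" "(cs ! 1, hd cs) \<in> graph_edges V E"
    using edge sym[OF edge(1)] by (simp_all add: graph_edges_def)
  ultimately show ?thesis using card_Diff_pair[OF finite_graph_edges[OF fin]] edge(2) by simp
qed

lemma acyclic_if_connected_card:
  assumes fin: "finite V" and sym: "\<And>x y. E x y \<Longrightarrow> E y x" and con: "graph_connected V E"
    and card: "card (graph_edges V E) + 2 = 2 * card V"
  shows "graph_acyclic V E"
  unfolding graph_acyclic_def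
proof
  assume "\<exists>cs. is_cycle V E cs"
  then obtain cs where cyc: "is_cycle V E cs" ..
  let ?E' = "\<lambda>x y. E x y \<and> {x, y} \<noteq> {hd cs, cs ! 1}"
  have "2 * card V \<le> card (graph_edges V ?E') + 2"
    by (rule card_graph_edges_ge[OF graph_connected_delete_cycle_edge[OF con sym cyc]])
      (simp add: insert_commute, blast dest: sym)
  then show False using card_graph_edges_delete_cycle_edge[OF fin sym cyc] card by linarith
qed

lemma is_tree_iff_card:
  assumes fin: "finite V" and wf: "\<And>x y. E x y \<Longrightarrow> x \<in> V \<and> y \<in> V"
    and sym: "\<And>x y. E x y \<Longrightarrow> E y x" and irr: "\<And>x. \<not> E x x"
  shows "is_tree V E \<longleftrightarrow>
    V \<noteq> {} \<and> graph_connected V E \<and> card (graph_edges V E) + 2 = 2 * card V"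
proof
  assume "is_tree V E"
  then have "V \<noteq> {}" "graph_connected V E" "graph_acyclic V E" by (auto simp: is_tree_def)
  then show "V \<noteq> {} \<and> graph_connected V E \<and> card (graph_edges V E) + 2 = 2 * card V"
    using card_graph_edges_ge[OF \<open>graph_connected V E\<close> sym]
      card_graph_edges_le[OF fin \<open>V \<noteq> {}\<close> wf sym irr \<open>graph_acyclic V E\<close>] by linarith
qed (use acyclic_if_connected_card[OF fin sym] in \<open>simp add: is_tree_def\<close>)

lemma graph_connected_image:
  assumes "graph_connected V E" and "f ` V = V'"
    and "\<And>x y. x \<in> V \<Longrightarrow> y \<in> V \<Longrightarrow> E x y \<Longrightarrow> E' (f x) (f y)"
  shows "graph_connected V' E'"
  unfolding graph_connected_iff_rtrancl
proof (intro ballI)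
  fix x' y' assume "x' \<in> V'" "y' \<in> V'"
  then obtain x y where "x \<in> V" "y \<in> V" "x' = f x" "y' = f y" using assms(2) by auto
  have "(x, y) \<in> (graph_edges V E)\<^sup>*"
    using assms(1) \<open>x \<in> V\<close> \<open>y \<in> V\<close> unfolding graph_connected_iff_rtrancl by blast
  then have "(f x, f y) \<in> (graph_edges V' E')\<^sup>*"
    by (rule rtrancl_map_rtrancl) (use assms(2,3) in \<open>auto simp: graph_edges_def\<close>)
  then show "(x', y') \<in> (graph_edges V' E')\<^sup>*" using \<open>x' = f x\<close> \<open>y' = f y\<close> by simp
qed

lemma graph_acyclic_inj_hom:
  assumes "graph_acyclic V E" and "inj_on f V'" and "f ` V' \<subseteq> V"
    and "\<And>x y. x \<in> V' \<Longrightarrow> y \<in> V' \<Longrightarrow> E' x y \<Longrightarrow> E (f x) (f y)"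
  shows "graph_acyclic V' E'"
  unfolding graph_acyclic_def
proof
  assume "\<exists>cs. is_cycle V' E' cs"
  then obtain cs where cs: "is_cycle V' E' cs" ..
  then have "set cs \<subseteq> V'" "cs \<noteq> []" by (auto simp: is_cycle_def)
  have "is_cycle V E (map f cs)"
    unfolding is_cycle_def
  proof (intro conjI allI impI)
    show "3 \<le> length (map f cs)" "set (map f cs) \<subseteq> V"
      using cs \<open>set cs \<subseteq> V'\<close> assms(3) by (auto simp: is_cycle_def)
    show "distinct (map f cs)"
      using cs \<open>set cs \<subseteq> V'\<close> assms(2) by (simp add: is_cycle_def distinct_map inj_on_subset)
    show "E (map f cs ! i) (map f cs ! Suc i)" if "Suc i < length (map f cs)" for i
    proof -
      have "cs ! i \<in> V'" "cs ! Suc i \<in> V'" using that \<open>set cs \<subseteq> V'\<close> by (auto dest: nth_mem)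
      then show ?thesis using cs that assms(4)[of "cs ! i" "cs ! Suc i"] by (simp add: is_cycle_def)
    qed
    show "E (last (map f cs)) (hd (map f cs))"
    proof -
      have "last cs \<in> V'" "hd cs \<in> V'" using \<open>set cs \<subseteq> V'\<close> \<open>cs \<noteq> []\<close> by auto
      then show ?thesis
        using cs \<open>cs \<noteq> []\<close> assms(4)[of "last cs" "hd cs"] by (simp add: is_cycle_def last_map hd_map)
    qed
  qed
  then show False using assms(1) by (simp add: graph_acyclic_def)
qed

section \<open>Factorial extendable languages\<close>

definition factorial :: "'a list set \<Rightarrow> bool" where
  "factorial L \<longleftrightarrow> (\<forall>u v. u @ v \<in> L \<longrightarrow> u \<in> L \<and> v \<in> L)"

definition extendable :: "'a list set \<Rightarrow> bool" where
  "extendable L \<longleftrightarrow> (\<forall>w\<in>L. (\<exists>a. a # w \<in> L) \<and> (\<exists>a. w @ [a] \<in> L))"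

lemma factorialD:
  assumes "factorial L" "u @ v \<in> L"
  shows "u \<in> L" "v \<in> L"
  using assms unfolding factorial_def by blast+

lemma extendable_left:
  assumes "extendable L" "w \<in> L"
  shows "\<exists>u. length u = k \<and> u @ w \<in> L"
proof (induction k)
  case (Suc k)
  then obtain u where "length u = k" "u @ w \<in> L" by blast
  moreover obtain a where "a # u @ w \<in> L" using assms(1) calculation(2) unfolding extendable_def by blast
  ultimately show ?case by (intro exI[of _ "a # u"]) simp
qed (use assms in simp)

lemma extendable_right:
  assumes "extendable L" "w \<in> L"
  shows "\<exists>v. length v = k \<and> w @ v \<in> L"
proof (induction k)
  case (Suc k)
  then obtain v where "length v = k" "w @ v \<in> L" by blast
  moreover obtain a where "(w @ v) @ [a] \<in> L" using assms(1) calculation(2) unfolding extendable_def by blast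
  ultimately show ?case by (intro exI[of _ "v @ [a]"]) simp
qed (use assms in simp)

lemma in_rev_image_iff: "x \<in> rev ` L \<longleftrightarrow> rev x \<in> L"
  by (metis image_iff rev_rev_ident)

lemma factorial_rev: "factorial L \<Longrightarrow> factorial (rev ` L)"
  unfolding factorial_def in_rev_image_iff by (metis rev_append)

lemma extendable_rev:
  assumes "extendable L"
  shows "extendable (rev ` L)"
  unfolding extendable_def
proof (intro ballI conjI)
  fix w assume "w \<in> rev ` L"
  then have "rev w \<in> L" by (simp add: in_rev_image_iff)
  then obtain a b where "rev w @ [a] \<in> L" "b # rev w \<in> L"
    using assms unfolding extendable_def by blast
  then show "\<exists>a. a # w \<in> rev ` L" "\<exists>a. w @ [a] \<in> rev ` L"
    by (auto simp: in_rev_image_iff)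
qed

section \<open>Extension graphs with different lengths on both sides\<close>

text \<open>
  The graph E_{p,q}(w) over an arbitrary language L; for L = lang X and p = q = n it is the graph
  of ext_graph_is_tree (see ext_graph_is_tree_eq). The bilateral multiplicity bimult is b_{p,q}(w).
\<close>

definition left_exts :: "'a list set \<Rightarrow> nat \<Rightarrow> 'a list \<Rightarrow> 'a list set" where
  "left_exts L p w = {u. length u = p \<and> u @ w \<in> L}"

definition right_exts :: "'a list set \<Rightarrow> nat \<Rightarrow> 'a list \<Rightarrow> 'a list set" where
  "right_exts L q w = {v. length v = q \<and> w @ v \<in> L}"

definition ext_pairs :: "'a list set \<Rightarrow> nat \<Rightarrow> nat \<Rightarrow> 'a list \<Rightarrow> ('a list \<times> 'a list) set" where
  "ext_pairs L p q w = {(u, v). length u = p \<and> length v = q \<and> u @ w @ v \<in> L}"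

definition ext_verts :: "'a list set \<Rightarrow> nat \<Rightarrow> nat \<Rightarrow> 'a list \<Rightarrow> ('a list + 'a list) set" where
  "ext_verts L p q w = Inl ` left_exts L p w \<union> Inr ` right_exts L q w"

definition ext_edge :: "'a list set \<Rightarrow> nat \<Rightarrow> nat \<Rightarrow> 'a list \<Rightarrow>
    ('a list + 'a list) \<Rightarrow> ('a list + 'a list) \<Rightarrow> bool" where
  "ext_edge L p q w x y \<longleftrightarrow> x \<in> ext_verts L p q w \<and> y \<in> ext_verts L p q w \<and>
     ((\<exists>u v. x = Inl u \<and> y = Inr v \<and> u @ w @ v \<in> L) \<or>
      (\<exists>u v. x = Inr v \<and> y = Inl u \<and> u @ w @ v \<in> L))"

abbreviation ext_connected :: "'a list set \<Rightarrow> nat \<Rightarrow> nat \<Rightarrow> 'a list \<Rightarrow> bool" where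
  "ext_connected L p q w \<equiv> graph_connected (ext_verts L p q w) (ext_edge L p q w)"

abbreviation ext_tree :: "'a list set \<Rightarrow> nat \<Rightarrow> nat \<Rightarrow> 'a list \<Rightarrow> bool" where
  "ext_tree L p q w \<equiv> is_tree (ext_verts L p q w) (ext_edge L p q w)"

definition bimult :: "'a list set \<Rightarrow> nat \<Rightarrow> nat \<Rightarrow> 'a list \<Rightarrow> int" where
  "bimult L p q w = int (card (ext_pairs L p q w)) - int (card (left_exts L p w))
     - int (card (right_exts L q w)) + 1"

lemma ext_edge_iff:
  assumes "factorial L"
  shows "ext_edge L p q w x y \<longleftrightarrow>
    (\<exists>u v. (u, v) \<in> ext_pairs L p q w \<and> (x = Inl u \<and> y = Inr v \<or> x = Inr v \<and> y = Inl u))"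
proof -
  have "u @ w \<in> L" "w @ v \<in> L" if "u @ w @ v \<in> L" for u v
    using factorialD[OF assms, of "u @ w" v] factorialD[OF assms, of u "w @ v"] that by auto
  then show ?thesis
    unfolding ext_edge_def ext_verts_def ext_pairs_def left_exts_def right_exts_def by auto
qed

lemma ext_edge_sym: "ext_edge L p q w x y \<Longrightarrow> ext_edge L p q w y x"
  unfolding ext_edge_def by blast

lemma ext_edge_irrefl: "\<not> ext_edge L p q w x x"
  unfolding ext_edge_def by auto

lemma ext_edge_verts: "ext_edge L p q w x y \<Longrightarrow> x \<in> ext_verts L p q w \<and> y \<in> ext_verts L p q w"
  unfolding ext_edge_def by blast

lemma graph_edges_ext: "graph_edges (ext_verts L p q w) (ext_edge L p q w) = {(x, y). ext_edge L p q w x y}"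
  by (auto simp: graph_edges_def ext_edge_def)

lemma finite_lists_of_length: "finite {xs :: 'a::finite list. length xs = n}"
  using finite_lists_length_eq[OF finite_UNIV, of n] by simp

lemma finite_left_exts: "finite (left_exts L p (w :: 'a::finite list))"
  by (rule finite_subset[OF _ finite_lists_of_length[of p]]) (auto simp: left_exts_def)

lemma finite_right_exts: "finite (right_exts L q (w :: 'a::finite list))"
  by (rule finite_subset[OF _ finite_lists_of_length[of q]]) (auto simp: right_exts_def)

lemma finite_ext_pairs: "finite (ext_pairs L p q (w :: 'a::finite list))"
  by (rule finite_subset[OF _ finite_cartesian_product[OF finite_lists_of_length[of p] finite_lists_of_length[of q]]])
    (auto simp: ext_pairs_def)

lemma finite_ext_verts: "finite (ext_verts L p q (w :: 'a::finite list))"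
  by (simp add: ext_verts_def finite_left_exts finite_right_exts)

lemma card_ext_verts:
  "card (ext_verts L p q (w :: 'a::finite list)) = card (left_exts L p w) + card (right_exts L q w)"
  unfolding ext_verts_def
  by (subst card_Un_disjoint) (auto simp: finite_left_exts finite_right_exts card_image)

lemma card_graph_edges_ext:
  fixes w :: "'a::finite list"
  assumes "factorial L"
  shows "card (graph_edges (ext_verts L p q w) (ext_edge L p q w)) = 2 * card (ext_pairs L p q w)"
proof -
  let ?lr = "\<lambda>(u, v). (Inl u, Inr v) :: ('a list + 'a list) \<times> ('a list + 'a list)"
  let ?rl = "\<lambda>(u, v). (Inr v, Inl u) :: ('a list + 'a list) \<times> ('a list + 'a list)"
  have "graph_edges (ext_verts L p q w) (ext_edge L p q w) = ?lr ` ext_pairs L p q w \<union> ?rl ` ext_pairs L p q w"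
    unfolding graph_edges_ext ext_edge_iff[OF assms] by auto
  moreover have "inj_on ?lr (ext_pairs L p q w)" "inj_on ?rl (ext_pairs L p q w)"
    by (auto intro!: inj_onI)
  moreover have "?lr ` ext_pairs L p q w \<inter> ?rl ` ext_pairs L p q w = {}" by auto
  ultimately show ?thesis by (simp add: card_Un_disjoint finite_ext_pairs card_image)
qed

lemma ext_tree_iff_bimult:
  fixes w :: "'a::finite list"
  assumes "factorial L"
  shows "ext_tree L p q w \<longleftrightarrow> ext_verts L p q w \<noteq> {} \<and> ext_connected L p q w \<and> bimult L p q w = 0"
proof -
  have "ext_tree L p q w \<longleftrightarrow> ext_verts L p q w \<noteq> {} \<and> ext_connected L p q w \<and>
      card (graph_edges (ext_verts L p q w) (ext_edge L p q w)) + 2 = 2 * card (ext_verts L p q w)"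
    by (rule is_tree_iff_card[OF finite_ext_verts ext_edge_verts ext_edge_sym ext_edge_irrefl])
  moreover have "2 * card (ext_pairs L p q w) + 2 = 2 * (card (left_exts L p w) + card (right_exts L q w))
      \<longleftrightarrow> bimult L p q w = 0"
    unfolding bimult_def by presburger
  ultimately show ?thesis unfolding card_graph_edges_ext[OF assms] card_ext_verts by simp
qed

lemma bimult_nonneg:
  fixes w :: "'a::finite list"
  assumes "factorial L" "ext_connected L p q w"
  shows "0 \<le> bimult L p q w"
proof -
  have "2 * card (ext_verts L p q w) \<le> card (graph_edges (ext_verts L p q w) (ext_edge L p q w)) + 2"
    by (rule card_graph_edges_ge[OF assms(2) ext_edge_sym])
  then show ?thesis
    unfolding card_graph_edges_ext[OF assms(1)] card_ext_verts bimult_def by presburger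
qed

lemma ext_verts_nonempty: "extendable L \<Longrightarrow> w \<in> L \<Longrightarrow> ext_verts L p q w \<noteq> {}"
  using extendable_left[of L w p] by (auto simp: ext_verts_def left_exts_def)

section \<open>Additivity of the multiplicity\<close>

lemma take_in_right_exts:
  assumes "factorial L" "w @ v \<in> L"
  shows "take q v \<in> right_exts L (min q (length v)) w"
proof -
  have "(w @ take q v) @ drop q v \<in> L" using assms(2) by simp
  then have "w @ take q v \<in> L" by (rule factorialD(1)[OF assms(1)])
  then show ?thesis by (simp add: right_exts_def)
qed

lemma card_right_exts_add:
  fixes w :: "'a::finite list"
  assumes "factorial L"
  shows "card (right_exts L (q1 + q2) w) = (\<Sum>t\<in>right_exts L q1 w. card (right_exts L q2 (w @ t)))"
proof -
  have "bij_betw (\<lambda>v. (take q1 v, drop q1 v)) (right_exts L (q1 + q2) w)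
      (Sigma (right_exts L q1 w) (\<lambda>t. right_exts L q2 (w @ t)))"
  proof (rule bij_betw_byWitness[where f' = "\<lambda>(t, s). t @ s"])
    show "(\<lambda>v. (take q1 v, drop q1 v)) ` right_exts L (q1 + q2) w
        \<subseteq> Sigma (right_exts L q1 w) (\<lambda>t. right_exts L q2 (w @ t))"
      using take_in_right_exts[OF assms, of w _ q1] by (auto simp: right_exts_def)
  qed (auto simp: right_exts_def)
  then show ?thesis by (simp add: bij_betw_same_card finite_right_exts)
qed

lemma card_ext_pairs_add:
  fixes w :: "'a::finite list"
  assumes "factorial L"
  shows "card (ext_pairs L p (q1 + q2) w) = (\<Sum>t\<in>right_exts L q1 w. card (ext_pairs L p q2 (w @ t)))"
proof -
  have "bij_betw (\<lambda>(u, v). (take q1 v, (u, drop q1 v))) (ext_pairs L p (q1 + q2) w)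
      (Sigma (right_exts L q1 w) (\<lambda>t. ext_pairs L p q2 (w @ t)))"
  proof (rule bij_betw_byWitness[where f' = "\<lambda>(t, (u, s)). (u, t @ s)"])
    show "(\<lambda>(u, v). (take q1 v, (u, drop q1 v))) ` ext_pairs L p (q1 + q2) w
        \<subseteq> Sigma (right_exts L q1 w) (\<lambda>t. ext_pairs L p q2 (w @ t))"
      using take_in_right_exts[OF assms, of w _ q1] factorialD(2)[OF assms]
      by (fastforce simp: right_exts_def ext_pairs_def)
  qed (auto simp: ext_pairs_def right_exts_def)
  then show ?thesis by (simp add: bij_betw_same_card finite_right_exts finite_ext_pairs)
qed

lemma card_ext_pairs_eq_sum_left_exts:
  fixes w :: "'a::finite list"
  assumes "factorial L"
  shows "card (ext_pairs L p q w) = (\<Sum>t\<in>right_exts L q w. card (left_exts L p (w @ t)))"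
proof -
  have "bij_betw (\<lambda>(u, t). (t, u)) (ext_pairs L p q w) (Sigma (right_exts L q w) (\<lambda>t. left_exts L p (w @ t)))"
  proof (rule bij_betw_byWitness[where f' = "\<lambda>(t, u). (u, t)"])
    show "(\<lambda>(u, t). (t, u)) ` ext_pairs L p q w \<subseteq> Sigma (right_exts L q w) (\<lambda>t. left_exts L p (w @ t))"
      using factorialD(2)[OF assms] by (auto simp: right_exts_def ext_pairs_def left_exts_def)
  qed (auto simp: right_exts_def ext_pairs_def left_exts_def)
  then show ?thesis by (simp add: bij_betw_same_card finite_right_exts finite_left_exts)
qed

lemma bimult_add:
  fixes w :: "'a::finite list"
  assumes "factorial L"
  shows "bimult L p (q1 + q2) w = bimult L p q1 w + (\<Sum>t\<in>right_exts L q1 w. bimult L p q2 (w @ t))"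
proof -
  have "(\<Sum>t\<in>right_exts L q1 w. bimult L p q2 (w @ t)) =
      (\<Sum>t\<in>right_exts L q1 w. int (card (ext_pairs L p q2 (w @ t))))
      - (\<Sum>t\<in>right_exts L q1 w. int (card (left_exts L p (w @ t))))
      - (\<Sum>t\<in>right_exts L q1 w. int (card (right_exts L q2 (w @ t)))) + int (card (right_exts L q1 w))"
    by (simp add: bimult_def sum.distrib sum_subtractf)
  also have "\<dots> = int (card (ext_pairs L p (q1 + q2) w)) - int (card (ext_pairs L p q1 w))
      - int (card (right_exts L (q1 + q2) w)) + int (card (right_exts L q1 w))"
    using card_ext_pairs_eq_sum_left_exts[OF assms, of p q1 w] card_right_exts_add[OF assms, of q1 q2 w]
      card_ext_pairs_add[OF assms, of p q1 q2 w]
    by (simp add: of_nat_sum)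
  finally show ?thesis by (simp add: bimult_def)
qed

section \<open>Connectedness under changing the right length\<close>

abbreviation ext_rel :: "'a list set \<Rightarrow> nat \<Rightarrow> nat \<Rightarrow> 'a list \<Rightarrow> (('a list + 'a list) \<times> ('a list + 'a list)) set" where
  "ext_rel L p q w \<equiv> graph_edges (ext_verts L p q w) (ext_edge L p q w)"

lemma ext_rel_iff:
  assumes "factorial L"
  shows "(x, y) \<in> ext_rel L p q w \<longleftrightarrow>
    (\<exists>u v. (u, v) \<in> ext_pairs L p q w \<and> (x = Inl u \<and> y = Inr v \<or> x = Inr v \<and> y = Inl u))"
  by (simp add: graph_edges_ext ext_edge_iff[OF assms])

lemma ext_pairs_take_right:
  assumes "factorial L" "(u, v) \<in> ext_pairs L p q w" "q' \<le> q"
  shows "(u, take q' v) \<in> ext_pairs L p q' w"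
proof -
  have "(u @ w @ take q' v) @ drop q' v \<in> L" using assms(2) by (simp add: ext_pairs_def)
  then have "u @ w @ take q' v \<in> L" by (rule factorialD(1)[OF assms(1)])
  then show ?thesis using assms(2,3) by (simp add: ext_pairs_def)
qed

lemma ext_connected_take_right:
  assumes fac: "factorial L" and ext: "extendable L" and con: "ext_connected L p q w" and "q' \<le> q"
  shows "ext_connected L p q' w"
proof (rule graph_connected_image[OF con])
  let ?f = "case_sum Inl (\<lambda>v. Inr (take q' v)) :: 'a list + 'a list \<Rightarrow> 'a list + 'a list"
  show "?f ` ext_verts L p q w = ext_verts L p q' w"
  proof
    show "?f ` ext_verts L p q w \<subseteq> ext_verts L p q' w"
      using take_in_right_exts[OF fac] \<open>q' \<le> q\<close>
      by (fastforce simp: ext_verts_def right_exts_def)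
    show "ext_verts L p q' w \<subseteq> ?f ` ext_verts L p q w"
    proof
      fix x assume x: "x \<in> ext_verts L p q' w"
      show "x \<in> ?f ` ext_verts L p q w"
      proof (cases x)
        case (Inl u)
        then show ?thesis using x by (force simp: ext_verts_def)
      next
        case (Inr t)
        then have t: "length t = q'" "w @ t \<in> L" using x by (auto simp: ext_verts_def right_exts_def)
        obtain s where "length s = q - q'" "(w @ t) @ s \<in> L" using extendable_right[OF ext t(2)] by blast
        then have "Inr (t @ s) \<in> ext_verts L p q w" "?f (Inr (t @ s)) = x"
          using t Inr \<open>q' \<le> q\<close> by (auto simp: ext_verts_def right_exts_def)
        then show ?thesis by force
      qed
    qed
  qed
  show "ext_edge L p q' w (?f x) (?f y)" if "ext_edge L p q w x y" for x y
    using that ext_pairs_take_right[OF fac _ \<open>q' \<le> q\<close>] unfolding ext_edge_iff[OF fac] by fastforce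
qed

lemma ext_rel_rtrancl_prefix_right:
  assumes fac: "factorial L" and t: "t \<in> right_exts L q w"
    and con: "ext_connected L p q2 (w @ t)"
    and "x \<in> ext_verts L p q2 (w @ t)" "y \<in> ext_verts L p q2 (w @ t)"
  shows "(case_sum Inl (\<lambda>s. Inr (t @ s)) x, case_sum Inl (\<lambda>s. Inr (t @ s)) y) \<in> (ext_rel L p (q + q2) w)\<^sup>*"
proof -
  have "(x, y) \<in> (ext_rel L p q2 (w @ t))\<^sup>*"
    using con assms(4,5) unfolding graph_connected_iff_rtrancl by blast
  then show ?thesis
  proof (rule rtrancl_map_rtrancl)
    fix a b assume "(a, b) \<in> ext_rel L p q2 (w @ t)"
    then obtain u s where "(u, s) \<in> ext_pairs L p q2 (w @ t)" "a = Inl u \<and> b = Inr s \<or> a = Inr s \<and> b = Inl u"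
      unfolding ext_rel_iff[OF fac] by blast
    moreover from this(1) have "(u, t @ s) \<in> ext_pairs L p (q + q2) w"
      using t by (simp add: ext_pairs_def right_exts_def)
    ultimately show "(case_sum Inl (\<lambda>s. Inr (t @ s)) a, case_sum Inl (\<lambda>s. Inr (t @ s)) b)
        \<in> (ext_rel L p (q + q2) w)\<^sup>*"
      by (auto intro!: r_into_rtrancl simp: ext_rel_iff[OF fac])
  qed
qed

lemma ext_connected_add_right:
  assumes fac: "factorial L" and ext: "extendable L" and con: "ext_connected L p q w"
    and cons: "\<And>t. t \<in> right_exts L q w \<Longrightarrow> ext_connected L p q2 (w @ t)"
  shows "ext_connected L p (q + q2) w"
proof -
  let ?G = "ext_rel L p (q + q2) w"
  have lefts: "(Inl u, Inl u') \<in> ?G\<^sup>*"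
    if "t \<in> right_exts L q w" "u \<in> left_exts L p (w @ t)" "u' \<in> left_exts L p (w @ t)" for t u u'
    using ext_rel_rtrancl_prefix_right[OF fac that(1) cons[OF that(1)], of "Inl u" "Inl u'"] that
    by (simp add: ext_verts_def)
  \<comment> \<open>along a path of E_{p,q}(w), each right vertex t is attached to some left extension of w t\<close>
  have reach: "case y of Inl u \<Rightarrow> (Inl u0, Inl u) \<in> ?G\<^sup>*
      | Inr t \<Rightarrow> (\<exists>u \<in> left_exts L p (w @ t). (Inl u0, Inl u) \<in> ?G\<^sup>*)"
    if "(Inl u0, y) \<in> (ext_rel L p q w)\<^sup>*" for u0 y
    using that
  proof (induction rule: rtrancl_induct)
    case (step y z)
    obtain u t where ut: "(u, t) \<in> ext_pairs L p q w" "y = Inl u \<and> z = Inr t \<or> y = Inr t \<and> z = Inl u"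
      using step.hyps(2) unfolding ext_rel_iff[OF fac] by blast
    then have "t \<in> right_exts L q w" "u \<in> left_exts L p (w @ t)"
      using factorialD(2)[OF fac, of u "w @ t"] by (auto simp: ext_pairs_def right_exts_def left_exts_def)
    with ut(2) step.IH show ?case using lefts rtrancl_trans by fastforce
  qed simp
  have anchor: "\<exists>u \<in> left_exts L p w. (Inl u, x) \<in> ?G\<^sup>*" if "x \<in> ext_verts L p (q + q2) w" for x
  proof (cases x)
    case (Inr v)
    then have v: "length v = q + q2" "w @ v \<in> L" using that by (auto simp: ext_verts_def right_exts_def)
    obtain u where u: "length u = p" "u @ w @ v \<in> L" using extendable_left[OF ext v(2)] by auto
    then have "u \<in> left_exts L p w" using factorialD(1)[OF fac, of "u @ w" v] by (simp add: left_exts_def)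
    moreover have "(Inl u, x) \<in> ?G" using u v Inr unfolding ext_rel_iff[OF fac] by (auto simp: ext_pairs_def)
    ultimately show ?thesis by (blast intro: r_into_rtrancl)
  qed (use that in \<open>auto simp: ext_verts_def\<close>)
  have "sym (?G\<^sup>*)" by (rule sym_rtrancl[OF sym_graph_edges]) (rule ext_edge_sym)
  show ?thesis
    unfolding graph_connected_iff_rtrancl
  proof (intro ballI)
    fix x y assume "x \<in> ext_verts L p (q + q2) w" "y \<in> ext_verts L p (q + q2) w"
    then obtain u1 u2 where u: "u1 \<in> left_exts L p w" "u2 \<in> left_exts L p w"
      and "(Inl u1, x) \<in> ?G\<^sup>*" "(Inl u2, y) \<in> ?G\<^sup>*" using anchor by metis
    then have "(x, Inl u1) \<in> ?G\<^sup>*" "(Inl u2, y) \<in> ?G\<^sup>*" using symD[OF \<open>sym (?G\<^sup>*)\<close>] by blast+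
    moreover have "(Inl u1, Inl u2) \<in> ?G\<^sup>*"
      using con u reach[of u1 "Inl u2"] unfolding graph_connected_iff_rtrancl by (simp add: ext_verts_def)
    ultimately show "(x, y) \<in> ?G\<^sup>*" by (meson rtrancl_trans)
  qed
qed

section \<open>Reversal\<close>

definition ext_mirror :: "'a list + 'a list \<Rightarrow> 'a list + 'a list" where
  "ext_mirror = case_sum (\<lambda>u. Inr (rev u)) (\<lambda>v. Inl (rev v))"

lemma ext_mirror_mirror [simp]: "ext_mirror (ext_mirror x) = x"
  by (cases x) (simp_all add: ext_mirror_def)

lemma left_exts_rev: "left_exts (rev ` L) q (rev w) = rev ` right_exts L q w"
  by (rule set_eqI) (simp add: left_exts_def right_exts_def in_rev_image_iff)

lemma right_exts_rev: "right_exts (rev ` L) p (rev w) = rev ` left_exts L p w"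
  by (rule set_eqI) (simp add: left_exts_def right_exts_def in_rev_image_iff)

lemma ext_mirror_in_verts_iff:
  "ext_mirror x \<in> ext_verts (rev ` L) q p (rev w) \<longleftrightarrow> x \<in> ext_verts L p q w"
  by (cases x) (auto simp: ext_mirror_def ext_verts_def left_exts_rev right_exts_rev in_rev_image_iff
      simp flip: image_image[of Inl rev] image_image[of Inr rev])

lemma ext_mirror_verts: "ext_mirror ` ext_verts L p q w = ext_verts (rev ` L) q p (rev w)"
proof
  show "ext_mirror ` ext_verts L p q w \<subseteq> ext_verts (rev ` L) q p (rev w)"
    using ext_mirror_in_verts_iff by blast
  show "ext_verts (rev ` L) q p (rev w) \<subseteq> ext_mirror ` ext_verts L p q w"
  proof
    fix x assume "x \<in> ext_verts (rev ` L) q p (rev w)"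
    then have "ext_mirror x \<in> ext_verts L p q w"
      using ext_mirror_in_verts_iff[of "ext_mirror x"] by simp
    then show "x \<in> ext_mirror ` ext_verts L p q w" by (metis ext_mirror_mirror image_eqI)
  qed
qed

lemma ext_edge_mirror:
  "ext_edge L p q w x y \<Longrightarrow> ext_edge (rev ` L) q p (rev w) (ext_mirror x) (ext_mirror y)"
  unfolding ext_edge_def ext_mirror_in_verts_iff
  by (cases x; cases y) (auto simp: ext_mirror_def in_rev_image_iff)

lemma ext_tree_rev:
  assumes "ext_tree L p q w"
  shows "ext_tree (rev ` L) q p (rev w)"
proof -
  have "ext_verts L p q w \<noteq> {}" and con: "ext_connected L p q w"
    and acyc: "graph_acyclic (ext_verts L p q w) (ext_edge L p q w)"
    using assms by (auto simp: is_tree_def)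
  then have "ext_verts (rev ` L) q p (rev w) \<noteq> {}" by (simp flip: ext_mirror_verts)
  moreover have "ext_connected (rev ` L) q p (rev w)"
  proof (rule graph_connected_image[OF con])
    show "ext_mirror ` ext_verts L p q w = ext_verts (rev ` L) q p (rev w)" by (rule ext_mirror_verts)
    show "ext_edge (rev ` L) q p (rev w) (ext_mirror x) (ext_mirror y)" if "ext_edge L p q w x y" for x y
      using that by (rule ext_edge_mirror)
  qed
  \<comment> \<open>mirroring back is an injective homomorphism into E_{p,q}(w)\<close>
  moreover have "graph_acyclic (ext_verts (rev ` L) q p (rev w)) (ext_edge (rev ` L) q p (rev w))"
  proof (rule graph_acyclic_inj_hom[OF acyc])
    show "inj_on ext_mirror (ext_verts (rev ` L) q p (rev w))" by (metis ext_mirror_mirror inj_onI)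
    show "ext_mirror ` ext_verts (rev ` L) q p (rev w) \<subseteq> ext_verts L p q w"
      using ext_mirror_verts[of "rev ` L" q p "rev w"] by (simp add: image_image)
    show "ext_edge L p q w (ext_mirror x) (ext_mirror y)" if "ext_edge (rev ` L) q p (rev w) x y" for x y
      using ext_edge_mirror[OF that] by (simp add: image_image)
  qed
  ultimately show ?thesis by (simp add: is_tree_def)
qed

section \<open>Reduction to E_{1,1}\<close>

definition ext_trees :: "'a list set \<Rightarrow> nat \<Rightarrow> nat \<Rightarrow> nat \<Rightarrow> bool" where
  "ext_trees L m p q \<longleftrightarrow> (\<forall>w\<in>L. m \<le> length w \<longrightarrow> ext_tree L p q w)"

lemma ext_trees_rev_iff: "ext_trees (rev ` L) m q p \<longleftrightarrow> ext_trees L m p q"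
proof -
  have *: "ext_trees (rev ` L) m q p" if "ext_trees L m p q" for L :: "'a list set" and p q
    using that ext_tree_rev[of L p q] by (auto simp: ext_trees_def)
  show ?thesis using *[of L p q] *[of "rev ` L" q p] by (auto simp: image_image)
qed

lemma ext_trees_right_one:
  fixes L :: "'a::finite list set"
  assumes fac: "factorial L" and ext: "extendable L" and "1 \<le> q" and trees: "ext_trees L m p q"
  shows "ext_trees L m p 1"
  unfolding ext_trees_def
proof (intro ballI impI)
  fix w assume w: "w \<in> L" "m \<le> length w"
  have connected: "ext_connected L p q' (w @ t)" if "t \<in> right_exts L 1 w" "q' \<le> q" for t q'
  proof -
    have "w @ t \<in> L" "m \<le> length (w @ t)" using that w by (auto simp: right_exts_def)
    then have "ext_connected L p q (w @ t)" using trees by (auto simp: ext_trees_def is_tree_def)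
    then show ?thesis using ext_connected_take_right[OF fac ext _ \<open>q' \<le> q\<close>] by blast
  qed
  have tree: "ext_tree L p q w" using trees w by (simp add: ext_trees_def)
  then have "ext_connected L p 1 w"
    using ext_connected_take_right[OF fac ext _ \<open>1 \<le> q\<close>] by (auto simp: is_tree_def)
  \<comment> \<open>E_{p,q}(w) has multiplicity zero, and splitting it into non-negative parts forces each to vanish\<close>
  moreover have "bimult L p 1 w = 0"
  proof -
    have "bimult L p q w = bimult L p 1 w + (\<Sum>t\<in>right_exts L 1 w. bimult L p (q - 1) (w @ t))"
      using bimult_add[OF fac, of p 1 "q - 1" w] \<open>1 \<le> q\<close> by simp
    moreover have "bimult L p q w = 0" using tree ext_tree_iff_bimult[OF fac] by blast
    moreover have "0 \<le> bimult L p 1 w" using bimult_nonneg[OF fac \<open>ext_connected L p 1 w\<close>] .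
    moreover have "0 \<le> (\<Sum>t\<in>right_exts L 1 w. bimult L p (q - 1) (w @ t))"
      using bimult_nonneg[OF fac connected] by (simp add: sum_nonneg)
    ultimately show ?thesis by linarith
  qed
  ultimately show "ext_tree L p 1 w"
    using ext_tree_iff_bimult[OF fac] ext_verts_nonempty[OF ext w(1)] by blast
qed

lemma ext_trees_right_grow:
  fixes L :: "'a::finite list set"
  assumes fac: "factorial L" and ext: "extendable L" and trees: "ext_trees L m p 1" and "1 \<le> q"
  shows "ext_trees L m p q"
  using \<open>1 \<le> q\<close>
proof (induction q rule: dec_induct)
  case (step q)
  show ?case
    unfolding ext_trees_def
  proof (intro ballI impI)
    fix w assume w: "w \<in> L" "m \<le> length w"
    have tree: "ext_tree L p q w" using step.IH w by (simp add: ext_trees_def)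
    have trees_t: "ext_tree L p 1 (w @ t)" if "t \<in> right_exts L q w" for t
      using trees that w by (auto simp: ext_trees_def right_exts_def)
    have "ext_connected L p (q + 1) w"
    proof (rule ext_connected_add_right[OF fac ext])
      show "ext_connected L p q w" using tree by (simp add: is_tree_def)
      show "ext_connected L p 1 (w @ t)" if "t \<in> right_exts L q w" for t
        using trees_t[OF that] by (simp add: is_tree_def)
    qed
    moreover have "bimult L p (q + 1) w = 0"
      using bimult_add[OF fac, of p q 1 w] tree trees_t ext_tree_iff_bimult[OF fac] by simp
    ultimately show "ext_tree L p (Suc q) w"
      using ext_tree_iff_bimult[OF fac] ext_verts_nonempty[OF ext w(1)] by simp
  qed
qed (use trees in simp)

lemma ext_trees_right_iff:
  fixes L :: "'a::finite list set"
  assumes "factorial L" "extendable L" "1 \<le> q"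
  shows "ext_trees L m p q \<longleftrightarrow> ext_trees L m p 1"
  using ext_trees_right_one[OF assms] ext_trees_right_grow[OF assms(1,2) _ assms(3)] by blast

lemma ext_trees_iff_one:
  fixes L :: "'a::finite list set"
  assumes fac: "factorial L" and ext: "extendable L" and "1 \<le> p" "1 \<le> q"
  shows "ext_trees L m p q \<longleftrightarrow> ext_trees L m 1 1"
proof -
  have fac': "factorial (rev ` L)" and ext': "extendable (rev ` L)"
    using factorial_rev[OF fac] extendable_rev[OF ext] .
  have "ext_trees L m p q \<longleftrightarrow> ext_trees L m p 1"
    using ext_trees_right_iff[OF fac ext \<open>1 \<le> q\<close>] .
  also have "\<dots> \<longleftrightarrow> ext_trees (rev ` L) m 1 p" by (simp add: ext_trees_rev_iff)
  also have "\<dots> \<longleftrightarrow> ext_trees (rev ` L) m 1 1" using ext_trees_right_iff[OF fac' ext' \<open>1 \<le> p\<close>] .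
  also have "\<dots> \<longleftrightarrow> ext_trees L m 1 1" by (simp add: ext_trees_rev_iff)
  finally show ?thesis .
qed

section \<open>Languages of sets of points\<close>

lemma factor_add: "factor x i (a + b) = factor x i a @ factor x (i + int a) b"
  by (induction b) (simp_all add: factor_def add.assoc)

lemma factor_Suc_left: "factor x (i - 1) (Suc n) = x (i - 1) # factor x i n"
  using factor_add[of x "i - 1" 1 n] by (simp add: factor_def)

lemma factor_Suc_right: "factor x i (Suc n) = factor x i n @ [x (i + int n)]"
  using factor_add[of x i n 1] by (simp add: factor_def)

lemma length_factor [simp]: "length (factor x i n) = n"
  by (simp add: factor_def)

lemma factor_in_lang: "x \<in> X \<Longrightarrow> factor x i n \<in> lang X"
  unfolding lang_def by (auto simp: factor_def)

lemma factorial_lang: "factorial (lang X)"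
  unfolding factorial_def
proof (intro allI impI)
  fix u v assume "u @ v \<in> lang X"
  then obtain x i where "x \<in> X" "u @ v = factor x i (length u) @ factor x (i + int (length u)) (length v)"
    by (auto simp: lang_def factor_add)
  then have "u = factor x i (length u)" "v = factor x (i + int (length u)) (length v)"
    by (simp_all add: append_eq_append_conv)
  then show "u \<in> lang X \<and> v \<in> lang X" using factor_in_lang[OF \<open>x \<in> X\<close>] by metis
qed

lemma extendable_lang: "extendable (lang X)"
  unfolding extendable_def
proof (intro ballI conjI)
  fix w assume "w \<in> lang X"
  then obtain x i n where "x \<in> X" "w = factor x i n" by (auto simp: lang_def)
  then show "\<exists>a. a # w \<in> lang X"
    using factor_in_lang[of x X "i - 1" "Suc n"] by (auto simp only: factor_Suc_left)
  show "\<exists>a. w @ [a] \<in> lang X"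
    using factor_in_lang[OF \<open>x \<in> X\<close>, of i "Suc n"] \<open>w = factor x i n\<close>
    by (auto simp only: factor_Suc_right)
qed

lemma ext_graph_is_tree_eq: "ext_graph_is_tree X n w \<longleftrightarrow> ext_tree (lang X) n n w"
proof -
  have "left_ext X n w = left_exts (lang X) n w" "right_ext X n w = right_exts (lang X) n w"
    using factorialD[OF factorial_lang, of _ w] factorialD[OF factorial_lang, of w]
    unfolding left_ext_def left_exts_def right_ext_def right_exts_def lang_n_def by blast+
  then have "ext_vertices X n w = ext_verts (lang X) n n w" "ext_adj X n w = ext_edge (lang X) n n w"
    by (simp_all add: ext_vertices_def ext_verts_def ext_adj_def ext_edge_def fun_eq_iff)
  then show ?thesis by (simp add: ext_graph_is_tree_def)
qed

theorem mainTheorem16: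
  fixes X :: "(int \<Rightarrow> 'a::finite) set" and n m :: nat
  assumes "shift_space X" and "1 \<le> n"
  shows "(\<forall>w\<in>lang_ge X m. ext_graph_is_tree X n w) \<longleftrightarrow>
         (\<forall>w\<in>lang_ge X m. ext_graph_is_tree X (Suc n) w)"
proof -
  have "(\<forall>w\<in>lang_ge X m. ext_graph_is_tree X k w) \<longleftrightarrow> ext_trees (lang X) m k k" for k
    by (auto simp: lang_ge_def ext_trees_def ext_graph_is_tree_eq)
  moreover have "ext_trees (lang X) m k k \<longleftrightarrow> ext_trees (lang X) m 1 1" if "1 \<le> k" for k
    using ext_trees_iff_one[OF factorial_lang extendable_lang that that] .
  ultimately show ?thesis using \<open>1 \<le> n\<close> by (metis le_SucI)
qed

end
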